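(* Let $\mathcal F=(F,\rightarrowtail)$ be an argumentation framework with grounded extension $\mathcal G$. If $A\subseteq F$ is weakly complete, then $\mathcal G\subseteq A$.
   Context: An argumentation framework $\mathcal F=(F,\rightarrowtail)$ consists of a (possibly infinite) set $F$ of arguments and an attack relation $\rightarrowtail\subseteq F\times F$. A set $S$ defends an argument $a$ if every attacker of $a$ is attacked by some element of $S$. Grounded extension: $\mathcal G_0=\emptyset$, $\mathcal G_{\alpha+1}=\{a\in F:\mathcal G_\alpha\text{ defends }a\}$, $\mathcal G_\lambda=\bigcup_{\alpha<\lambda}\mathcal G_\alpha$ for limit $\lambda$; the grounded extension $\mathcal G$ is the value at which this ordinal-indexed sequence stabilizes. A weakly complete labeling is a map $L:F\to\{\mathtt{in},\mathtt{out},\mathtt{undec}\}$ such that for every $a\in F$: if $L(a)=\mathtt{in}$ then no attacker of $a$ is labeled $\mathtt{in}$; if $L(a)=\mathtt{out}$ then some attacker of $a$ is labeled $\mathtt{in}$; if $L(a)=\mathtt{undec}$ then some attacker of $a$ is labeled $\mathtt{undec}$ and no attacker of $a$ is labeled $\mathtt{in}$. A set $A$ is weakly complete if $A=\{a:L(a)=\mathtt{in}\}$ for some weakly complete labeling $L$. *)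

theory Defs
  imports Main
begin

datatype label = In | Out | Undec

definition argumentation_framework :: "'a set \<Rightarrow> ('a \<Rightarrow> 'a \<Rightarrow> bool) \<Rightarrow> bool" where
  "argumentation_framework F att \<longleftrightarrow> (\<forall>a b. att a b \<longrightarrow> a \<in> F \<and> b \<in> F)"

definition defends :: "('a \<Rightarrow> 'a \<Rightarrow> bool) \<Rightarrow> 'a set \<Rightarrow> 'a \<Rightarrow> bool" where
  "defends att S a \<longleftrightarrow> (\<forall>b. att b a \<longrightarrow> (\<exists>c\<in>S. att c b))"

definition defense_op :: "'a set \<Rightarrow> ('a \<Rightarrow> 'a \<Rightarrow> bool) \<Rightarrow> 'a set \<Rightarrow> 'a set" where
  "defense_op F att S = {a \<in> F. defends att S a}"

(* The transfinite sequence G_0 = {}, G_{alpha+1} = defense_op G_alpha, unions at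
   limits, stabilises at the least fixed point of the monotone operator defense_op;
   we define the grounded extension as that least fixed point. *)
definition grounded :: "'a set \<Rightarrow> ('a \<Rightarrow> 'a \<Rightarrow> bool) \<Rightarrow> 'a set" where
  "grounded F att = lfp (defense_op F att)"

definition weakly_complete_labeling ::
  "'a set \<Rightarrow> ('a \<Rightarrow> 'a \<Rightarrow> bool) \<Rightarrow> ('a \<Rightarrow> label) \<Rightarrow> bool" where
  "weakly_complete_labeling F att L \<longleftrightarrow>
     (\<forall>a\<in>F.
        (L a = In \<longrightarrow> (\<forall>b. att b a \<longrightarrow> L b \<noteq> In)) \<and>
        (L a = Out \<longrightarrow> (\<exists>b. att b a \<and> L b = In)) \<and>
        (L a = Undec \<longrightarrow> (\<exists>b. att b a \<and> L b = Undec) \<and> (\<forall>b. att b a \<longrightarrow> L b \<noteq> In)))"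

definition weakly_complete :: "'a set \<Rightarrow> ('a \<Rightarrow> 'a \<Rightarrow> bool) \<Rightarrow> 'a set \<Rightarrow> bool" where
  "weakly_complete F att A \<longleftrightarrow>
     (\<exists>L. weakly_complete_labeling F att L \<and> A = {a \<in> F. L a = In})"

end

theory Submission
  imports Defs
begin

text \<open>The arguments labelled \<open>In\<close> by a weakly complete labeling form a set that
contains every argument it defends: an attacker of a defended argument is attacked by an
\<open>In\<close> argument, hence is \<open>Out\<close>, and an argument all of whose attackers are \<open>Out\<close> can be
neither \<open>Out\<close> nor \<open>Undec\<close>. So this set is a pre-fixed point of the defense operator and
therefore contains its least fixed point, the grounded extension.\<close>

lemma weakly_complete_labeling_attacked_by_In:
  assumes "weakly_complete_labeling F att L" and "argumentation_framework F att"
    and "att c b" and "L c = In"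
  shows "L b = Out"
proof -
  have "b \<in> F" using assms(2,3) unfolding argumentation_framework_def by blast
  then show ?thesis
    using assms(1,3,4) unfolding weakly_complete_labeling_def by (cases "L b") blast+
qed

lemma weakly_complete_labeling_attackers_Out:
  assumes "weakly_complete_labeling F att L" and "a \<in> F"
    and "\<And>b. att b a \<Longrightarrow> L b = Out"
  shows "L a = In"
  using assms unfolding weakly_complete_labeling_def
  by (cases "L a") (fastforce+)

lemma defense_op_In_subset:
  assumes "weakly_complete_labeling F att L" and "argumentation_framework F att"
  shows "defense_op F att {a \<in> F. L a = In} \<subseteq> {a \<in> F. L a = In}"
proof
  fix a assume "a \<in> defense_op F att {a \<in> F. L a = In}"
  then have "a \<in> F" and defended: "\<And>b. att b a \<Longrightarrow> \<exists>c. L c = In \<and> att c b"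
    unfolding defense_op_def defends_def by auto
  have "L b = Out" if "att b a" for b
    using defended[OF that] weakly_complete_labeling_attacked_by_In[OF assms] by blast
  with \<open>a \<in> F\<close> show "a \<in> {a \<in> F. L a = In}"
    using weakly_complete_labeling_attackers_Out[OF assms(1)] by blast
qed

theorem mainTheorem12:
  fixes F :: "'a set" and att :: "'a \<Rightarrow> 'a \<Rightarrow> bool" and A :: "'a set"
  assumes "argumentation_framework F att"
    and "weakly_complete F att A"
  shows "grounded F att \<subseteq> A"
proof -
  obtain L where L: "weakly_complete_labeling F att L" and A: "A = {a \<in> F. L a = In}"
    using assms(2) unfolding weakly_complete_def by blast
  show ?thesis
    unfolding grounded_def A
    by (rule lfp_lowerbound) (rule defense_op_In_subset[OF L assms(1)])
qed

end
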